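(* Let $q\ge0$, $N>0$, $g(v)=N\min(1,|v|^{-q})$, and let $f:\mathbb R^d\to[0,\infty)$ satisfy the hydrodynamic bounds, $f\le g$ on $\mathbb R^d$ and $f(v)=g(v)$ at some $v\in\mathbb R^d$. Then at this $v$: if $\gamma\ge0$, $$Q_{ns}(f,f)(v)\lesssim(1+|v|)^\gamma g(v),$$ while if $\gamma<0$, $$Q_{ns}(f,f)(v)\lesssim 2^{-\frac{q\gamma}d}g(v)^{1-\frac\gamma d}+(1+|v|)^\gamma g(v).$$ Moreover, when $q=0$ and $\gamma\in(-d,0)$, there is a function $\psi:(0,\infty)\to(0,\infty)$ with $\psi(r)\to0$ as $r\to+\infty$, depending on $M_0$ and $H_0$, such that $$Q_{ns}(f,f)(v)\lesssim g(v)^{1-\frac\gamma d}\psi(g(v))+(1+|v|)^\gamma g(v).$$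
   Context: Fix $d\ge2$, $s\in(0,1)$, $\gamma\in\mathbb R$ with $\gamma+2s\in[0,2]$; collision kernel $B(r,\cos\theta)=r^\gamma b(\cos\theta)$ with $b(\cos\theta)=(\sin\frac\theta2)^{-(d-2)+\gamma}(\tan\frac\theta2)^{-(\gamma+2s+1)}\tilde b(\cos\theta)$, $\tilde b$ smooth with $0<\tilde b_0\le\tilde b\le\tilde b_1$. Hydrodynamic bounds: $m_0\le\int f\le M_0$, $\int f|v|^2\le E_0$, $\int f\ln f\le H_0$. $A\lesssim B$ means $A\le CB$ with $C$ depending only on $d,\gamma,s,\tilde b_0,\tilde b_1,m_0,M_0,E_0,H_0$. The non-singular part of the collision operator is $Q_{ns}(f_1,f_2)(v)=C_S\,f_2(v)\int_{\mathbb R^d}f_1(v_* )|v-v_*|^\gamma\,dv_*$, where $C_S=|\mathbb S^{d-2}|\int_0^{\pi/2}(\sin\theta)^{d-2}\big[(\cos\frac\theta2)^{-d-\gamma}-1\big]b(\cos\theta)\,d\theta\in(0,\infty)$. *)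

theory Defs
  imports "HOL-Analysis.Analysis"
begin

text \<open>Surface measure of the unit sphere S^{k-1} in R^k: 2 pi^{k/2} / Gamma(k/2).
  The constant |S^{d-2}| is sphere_area (d - 1).\<close>
definition sphere_area :: "nat \<Rightarrow> real" where
  "sphere_area k = 2 * pi powr (real k / 2) / Gamma (real k / 2)"

definition smooth_near_interval :: "(real \<Rightarrow> real) \<Rightarrow> bool" where
  "smooth_near_interval bt \<longleftrightarrow>
     (\<exists>U. open U \<and> {-1..1} \<subseteq> U \<and> (\<forall>k. ((deriv ^^ k) bt) differentiable_on U))"

text \<open>Angular kernel b(cos theta), written as a function of theta.\<close>
definition b_ang :: "nat \<Rightarrow> real \<Rightarrow> real \<Rightarrow> (real \<Rightarrow> real) \<Rightarrow> real \<Rightarrow> real" where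
  "b_ang d \<gamma> s bt \<theta> =
     sin (\<theta>/2) powr (\<gamma> - (real d - 2)) * tan (\<theta>/2) powr (- (\<gamma> + 2 * s + 1)) * bt (cos \<theta>)"

definition C_S :: "nat \<Rightarrow> real \<Rightarrow> real \<Rightarrow> (real \<Rightarrow> real) \<Rightarrow> real" where
  "C_S d \<gamma> s bt = sphere_area (d - 1) *
     (LBINT \<theta>=0..pi/2. sin \<theta> ^ (d - 2) * (cos (\<theta>/2) powr (- real d - \<gamma>) - 1) * b_ang d \<gamma> s bt \<theta>)"

definition Q_ns :: "real \<Rightarrow> real \<Rightarrow> (real \<Rightarrow> real) \<Rightarrow> (real^'n \<Rightarrow> real) \<Rightarrow> (real^'n \<Rightarrow> real) \<Rightarrow> real^'n \<Rightarrow> real" where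
  "Q_ns \<gamma> s bt f1 f2 v = C_S CARD('n) \<gamma> s bt * f2 v *
     (LINT w|lborel. f1 w * norm (v - w) powr \<gamma>)"

definition hydro_bounds :: "real \<Rightarrow> real \<Rightarrow> real \<Rightarrow> real \<Rightarrow> (real^'n \<Rightarrow> real) \<Rightarrow> bool" where
  "hydro_bounds m0 M0 E0 H0 f \<longleftrightarrow>
     f \<in> borel_measurable lborel \<and> (\<forall>v. 0 \<le> f v) \<and>
     integrable lborel f \<and> integrable lborel (\<lambda>v. f v * norm v ^ 2) \<and>
     integrable lborel (\<lambda>v. f v * ln (f v)) \<and>
     m0 \<le> (LINT v|lborel. f v) \<and> (LINT v|lborel. f v) \<le> M0 \<and>
     (LINT v|lborel. f v * norm v ^ 2) \<le> E0 \<and>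
     (LINT v|lborel. f v * ln (f v)) \<le> H0"

text \<open>g(v) = N min(1, |v|^{-q}), with |0|^{-q} = +infinity for q > 0.\<close>
definition gfun :: "real \<Rightarrow> real \<Rightarrow> real^'n \<Rightarrow> real" where
  "gfun N q v = (if v = 0 then N else N * min 1 (norm v powr (- q)))"

end

theory Submission
  imports Defs
begin

text \<open>Since \<open>Q_ns(f,f)(v) = C_S f(v) \<integral> f(w) |v - w|^\<gamma> dw\<close> and \<open>|C_S|\<close> is bounded by \<open>bt1\<close> times
  a fixed angular integral, everything reduces to bounding the potential \<open>\<integral> f(w) |v - w|^\<gamma> dw\<close>.
  For \<open>0 \<le> \<gamma> \<le> 2\<close>, \<open>|v - w| \<le> (1 + |v|)(1 + |w|)\<close> bounds it by mass and energy.
  For \<open>\<gamma> < 0\<close> we use the bathtub estimate: if \<open>f \<le> A\<close> on the ball of radius \<open>\<rho>\<close> around \<open>v\<close>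
  and \<open>\<integral> f \<le> m\<close>, the potential is at most \<open>c A \<rho>^(d+\<gamma>) + m \<rho>^\<gamma>\<close>, which is optimal for
  \<open>A \<rho>^d = m\<close>. Since \<open>g\<close> varies by at most a factor \<open>2^q\<close> on the ball of radius \<open>max 1 |v| / 2\<close>,
  \<open>A = 2^q g(v)\<close> works. For \<open>q = 0\<close> we split \<open>f\<close> at the level \<open>\<surd>N\<close>: by the entropy bound the
  part above it has mass \<open>O(1 / ln N)\<close>, which produces the factor \<open>\<psi>(N) \<rightarrow> 0\<close>.\<close>

lemma ex_dyadic_interval:
  fixes y :: real
  assumes "1 \<le> y"
  shows "\<exists>k::nat. 2 ^ k \<le> y \<and> y < 2 ^ (k + 1)"
proof -
  define k where "k = nat \<lfloor>log 2 y\<rfloor>"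
  have "\<lfloor>log 2 y\<rfloor> = int k"
    using assms unfolding k_def by simp
  then have "2 powr real k \<le> y \<and> y < 2 powr (real k + 1)"
    using floor_log_eq_powr_iff[of y 2 "int k"] assms by simp
  then show ?thesis
    by (metis powr_realpow of_nat_Suc Suc_eq_plus1 add.commute zero_less_numeral)
qed

lemma nn_integral_suminf_cball:
  fixes x :: "'a::euclidean_space"
  assumes "\<And>k. 0 \<le> c k" "\<And>k. 0 \<le> r k"
  shows "(\<integral>\<^sup>+w. (\<Sum>k. ennreal (c k) * indicator (cball x (r k)) w) \<partial>lborel)
       = (\<Sum>k. ennreal (c k * (unit_ball_vol DIM('a) * r k ^ DIM('a))))"
  using assms
  by (subst nn_integral_suminf)
     (auto intro!: borel_measurable_times_ennreal borel_measurable_indicator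
           simp: nn_integral_cmult_indicator emeasure_cball ennreal_mult)

lemma suminf_ennreal_geometric:
  fixes a q :: real
  assumes "0 \<le> a" "0 \<le> q" "q < 1"
  shows "(\<Sum>k. ennreal (a * q ^ k)) = ennreal (a / (1 - q))"
proof (rule suminf_ennreal_eq)
  show "(\<lambda>k. a * q ^ k) sums (a / (1 - q))"
    using sums_mult[OF geometric_sums, of q a] assms by (simp add: divide_inverse)
qed (use assms in auto)

lemma mult_divide_powr_eq:
  fixes m A e :: real
  assumes "0 < m" "0 < A"
  shows "m * (m / A) powr e = m powr (1 + e) * A powr (-e)"
  using assms by (simp add: powr_divide powr_add powr_minus_divide)

lemma mult_add_le_add_mult_add:
  fixes a b x y :: real
  assumes "0 \<le> a" "0 \<le> b" "0 \<le> x" "0 \<le> y"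
  shows "a * x + b * y \<le> (a + b) * (x + y)"
  using assms by (simp add: algebra_simps)

definition riesz_ball_const :: "nat \<Rightarrow> real \<Rightarrow> real" where
  "riesz_ball_const d \<gamma> = unit_ball_vol d * 2 powr (-\<gamma>) / (1 - 2 powr (-(real d + \<gamma>)))"

lemma riesz_ball_const_pos: "0 < real d + \<gamma> \<Longrightarrow> 0 < riesz_ball_const d \<gamma>"
  unfolding riesz_ball_const_def by (intro divide_pos_pos mult_pos_pos) (auto simp: powr_less_one)

lemma dyadic_riesz_term_eq:
  fixes \<rho> \<gamma> c :: real and d k :: nat
  assumes "0 < \<rho>"
  shows "(\<rho> / 2 ^ (k + 1)) powr \<gamma> * (c * (\<rho> / 2 ^ k) ^ d)
     = c * 2 powr (-\<gamma>) * \<rho> powr (real d + \<gamma>) * (2 powr (-(real d + \<gamma>))) ^ k"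
proof -
  have "(\<rho> / 2 ^ (k + 1)) powr \<gamma> = \<rho> powr \<gamma> * 2 powr (-\<gamma>) * (2 powr (-\<gamma>)) ^ k"
    using assms by (simp add: powr_divide powr_mult powr_powr powr_minus field_simps flip: powr_realpow)
  moreover have "(\<rho> / 2 ^ k) ^ d = \<rho> powr real d * (2 powr (- real d)) ^ k"
    using assms by (simp add: power_divide powr_realpow powr_minus field_simps flip: power_mult powr_powr)
  moreover have "(2::real) powr (-(real d + \<gamma>)) = 2 powr (- real d) * 2 powr (-\<gamma>)"
    by (simp add: powr_add[symmetric])
  ultimately show ?thesis
    by (simp add: powr_add power_mult_distrib mult_ac)
qed

text \<open>Cover the ball by the dyadic shells \<open>\<rho>/2^(k+1) < |v - w| \<le> \<rho>/2^k\<close>, on each of which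
  the kernel is at most \<open>(\<rho>/2^(k+1))^\<gamma>\<close>; the resulting series is geometric because \<open>d + \<gamma> > 0\<close>.\<close>
lemma nn_integral_cball_riesz_kernel_le:
  fixes v :: "'a::euclidean_space"
  assumes "\<gamma> \<le> 0" "0 < real DIM('a) + \<gamma>" "0 < \<rho>"
  shows "(\<integral>\<^sup>+w. indicator (cball v \<rho>) w * ennreal (norm (v - w) powr \<gamma>) \<partial>lborel)
     \<le> ennreal (riesz_ball_const DIM('a) \<gamma> * \<rho> powr (real DIM('a) + \<gamma>))"
proof -
  let ?d = "DIM('a)"
  define F where "F w = (\<Sum>k. ennreal ((\<rho> / 2 ^ (k + 1)) powr \<gamma>) * indicator (cball v (\<rho> / 2 ^ k)) w)"
    for w :: 'a
  have kernel_le_F: "indicator (cball v \<rho>) w * ennreal (norm (v - w) powr \<gamma>) \<le> F w" for w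
  proof (cases "w \<in> cball v \<rho> \<and> w \<noteq> v")
    case True
    then have t: "0 < norm (v - w)" "norm (v - w) \<le> \<rho>"
      by (auto simp: dist_norm)
    then obtain k :: nat where k: "2 ^ k \<le> \<rho> / norm (v - w)" "\<rho> / norm (v - w) < 2 ^ (k + 1)"
      using ex_dyadic_interval[of "\<rho> / norm (v - w)"] by auto
    have "norm (v - w) \<le> \<rho> / 2 ^ k" "\<rho> / 2 ^ (k + 1) \<le> norm (v - w)"
      using k t by (simp_all add: field_simps)
    then have "indicator (cball v \<rho>) w * ennreal (norm (v - w) powr \<gamma>)
        \<le> ennreal ((\<rho> / 2 ^ (k + 1)) powr \<gamma>) * indicator (cball v (\<rho> / 2 ^ k)) w"
      using True assms by (auto simp: dist_norm intro!: ennreal_leI powr_mono2')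
    also have "\<dots> \<le> F w"
      unfolding F_def by (rule sum_le_suminf[OF summableI, of "{k}", simplified])
    finally show ?thesis .
  qed (auto simp: indicator_def)
  define q where "q = (2::real) powr (-(real ?d + \<gamma>))"
  have q: "0 \<le> q" "q < 1"
    unfolding q_def using assms by (auto simp: powr_less_one)
  have "(\<integral>\<^sup>+w. indicator (cball v \<rho>) w * ennreal (norm (v - w) powr \<gamma>) \<partial>lborel) \<le> integral\<^sup>N lborel F"
    by (intro nn_integral_mono kernel_le_F)
  also have "\<dots> = (\<Sum>k. ennreal (unit_ball_vol ?d * 2 powr (-\<gamma>) * \<rho> powr (real ?d + \<gamma>) * q ^ k))"
    unfolding F_def q_def using assms
    by (subst nn_integral_suminf_cball) (simp_all only: dyadic_riesz_term_eq, auto)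
  also have "\<dots> = ennreal (riesz_ball_const ?d \<gamma> * \<rho> powr (real ?d + \<gamma>))"
    using q by (subst suminf_ennreal_geometric) (auto simp: riesz_ball_const_def q_def)
  finally show ?thesis .
qed

lemma nn_integral_riesz_le_near_far:
  fixes v :: "'a::euclidean_space" and h :: "'a \<Rightarrow> real"
  assumes \<gamma>: "\<gamma> \<le> 0" "0 < real DIM('a) + \<gamma>" and \<rho>: "0 < \<rho>" and "0 \<le> A" "0 \<le> m"
    and h: "h \<in> borel_measurable lborel" "\<And>w. 0 \<le> h w"
    and mass: "(\<integral>\<^sup>+w. h w \<partial>lborel) \<le> ennreal m"
    and h_le: "\<And>w. w \<in> cball v \<rho> \<Longrightarrow> h w \<le> A"
  shows "(\<integral>\<^sup>+w. ennreal (h w * norm (v - w) powr \<gamma>) \<partial>lborel)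
     \<le> ennreal (A * riesz_ball_const DIM('a) \<gamma> * \<rho> powr (real DIM('a) + \<gamma>) + m * \<rho> powr \<gamma>)"
proof -
  define K where "K w = indicator (cball v \<rho>) w * ennreal (norm (v - w) powr \<gamma>)" for w
  have "(\<lambda>w. norm (v - w) powr \<gamma>) \<in> borel_measurable lborel"
    by measurable
  then have K_meas: "K \<in> borel_measurable lborel"
    unfolding K_def by (intro borel_measurable_times_ennreal borel_measurable_indicator) auto
  have split: "ennreal (h w * norm (v - w) powr \<gamma>) \<le> ennreal A * K w + ennreal (\<rho> powr \<gamma>) * h w" for w
  proof (cases "w \<in> cball v \<rho>")
    case True
    then have "ennreal (h w * norm (v - w) powr \<gamma>) \<le> ennreal A * K w"
      using h_le[OF True] h(2)[of w] \<open>0 \<le> A\<close>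
      by (simp add: K_def ennreal_mult[symmetric] ennreal_leI mult_right_mono)
    then show ?thesis
      by (rule order_trans) simp
  next
    case False
    then have "norm (v - w) powr \<gamma> \<le> \<rho> powr \<gamma>"
      using \<gamma> \<rho> by (intro powr_mono2') (auto simp: dist_norm)
    then have "ennreal (h w * norm (v - w) powr \<gamma>) \<le> ennreal (\<rho> powr \<gamma>) * h w"
      using h(2)[of w] by (simp add: ennreal_mult[symmetric] ennreal_leI mult_left_mono mult.commute)
    then show ?thesis
      by (rule order_trans) simp
  qed
  have "(\<integral>\<^sup>+w. ennreal (h w * norm (v - w) powr \<gamma>) \<partial>lborel)
      \<le> (\<integral>\<^sup>+w. ennreal A * K w + ennreal (\<rho> powr \<gamma>) * h w \<partial>lborel)"
    by (intro nn_integral_mono split)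
  also have "\<dots> = ennreal A * integral\<^sup>N lborel K + ennreal (\<rho> powr \<gamma>) * (\<integral>\<^sup>+w. h w \<partial>lborel)"
    using K_meas h(1) by (subst nn_integral_add) (auto simp: nn_integral_cmult)
  also have "\<dots> \<le> ennreal A * ennreal (riesz_ball_const DIM('a) \<gamma> * \<rho> powr (real DIM('a) + \<gamma>))
      + ennreal (\<rho> powr \<gamma>) * ennreal m"
    unfolding K_def by (intro add_mono mult_left_mono nn_integral_cball_riesz_kernel_le \<gamma> \<rho> mass) auto
  also have "\<dots> = ennreal (A * riesz_ball_const DIM('a) \<gamma> * \<rho> powr (real DIM('a) + \<gamma>) + m * \<rho> powr \<gamma>)"
    using riesz_ball_const_pos[OF \<gamma>(2)] \<open>0 \<le> A\<close> \<open>0 \<le> m\<close>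
    by (simp add: ennreal_plus ennreal_mult mult_ac)
  finally show ?thesis .
qed

lemma nn_integral_riesz_le_optimal:
  fixes v :: "'a::euclidean_space" and h :: "'a \<Rightarrow> real"
  assumes \<gamma>: "\<gamma> \<le> 0" "0 < real DIM('a) + \<gamma>" and "0 < A" "0 < m"
    and h: "h \<in> borel_measurable lborel" "\<And>w. 0 \<le> h w"
    and mass: "(\<integral>\<^sup>+w. h w \<partial>lborel) \<le> ennreal m"
    and h_le: "\<And>w. w \<in> cball v ((m / A) powr (1 / DIM('a))) \<Longrightarrow> h w \<le> A"
  shows "(\<integral>\<^sup>+w. ennreal (h w * norm (v - w) powr \<gamma>) \<partial>lborel)
     \<le> ennreal ((riesz_ball_const DIM('a) \<gamma> + 1) * m * (m / A) powr (\<gamma> / DIM('a)))"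
proof -
  let ?d = "real DIM('a)" and ?\<rho> = "(m / A) powr (1 / DIM('a))" and ?c = "riesz_ball_const DIM('a) \<gamma>"
  have "?\<rho> powr (?d + \<gamma>) = (m / A) * (m / A) powr (\<gamma> / ?d)"
    using \<open>0 < A\<close> \<open>0 < m\<close> by (simp add: powr_powr powr_add add_divide_distrib)
  moreover have "?\<rho> powr \<gamma> = (m / A) powr (\<gamma> / ?d)"
    by (simp add: powr_powr)
  ultimately have "A * ?c * ?\<rho> powr (?d + \<gamma>) + m * ?\<rho> powr \<gamma> = (?c + 1) * m * (m / A) powr (\<gamma> / ?d)"
    using \<open>0 < A\<close> by (simp add: field_simps)
  moreover have "(\<integral>\<^sup>+w. ennreal (h w * norm (v - w) powr \<gamma>) \<partial>lborel)
      \<le> ennreal (A * ?c * ?\<rho> powr (?d + \<gamma>) + m * ?\<rho> powr \<gamma>)"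
    using assms by (intro nn_integral_riesz_le_near_far) auto
  ultimately show ?thesis
    by simp
qed

lemma nn_integral_riesz_le_local:
  fixes v :: "'a::euclidean_space" and h :: "'a \<Rightarrow> real"
  assumes \<gamma>: "\<gamma> \<le> 0" "0 < real DIM('a) + \<gamma>" and "0 < A" "0 < m" "0 < r"
    and h: "h \<in> borel_measurable lborel" "\<And>w. 0 \<le> h w"
    and mass: "(\<integral>\<^sup>+w. h w \<partial>lborel) \<le> ennreal m"
    and h_le: "\<And>w. w \<in> cball v r \<Longrightarrow> h w \<le> A"
  shows "(\<integral>\<^sup>+w. ennreal (h w * norm (v - w) powr \<gamma>) \<partial>lborel)
     \<le> ennreal ((riesz_ball_const DIM('a) \<gamma> + 1) * m * ((m / A) powr (\<gamma> / DIM('a)) + r powr \<gamma>))"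
proof -
  let ?d = "real DIM('a)" and ?c = "riesz_ball_const DIM('a) \<gamma>"
  have c: "0 < ?c"
    using riesz_ball_const_pos[OF \<gamma>(2)] .
  show ?thesis
  proof (cases "(m / A) powr (1 / DIM('a)) \<le> r")
    case True
    then have "(\<integral>\<^sup>+w. ennreal (h w * norm (v - w) powr \<gamma>) \<partial>lborel)
        \<le> ennreal ((?c + 1) * m * (m / A) powr (\<gamma> / DIM('a)))"
      using assms by (intro nn_integral_riesz_le_optimal) auto
    also have "\<dots> \<le> ennreal ((?c + 1) * m * ((m / A) powr (\<gamma> / DIM('a)) + r powr \<gamma>))"
      using c \<open>0 < m\<close> by (intro ennreal_leI mult_left_mono) auto
    finally show ?thesis .
  next
    case False
    \<comment> \<open>\<open>r\<close> is below the optimal radius, so \<open>A r^d \<le> m\<close> and the near part is dominated by the far part\<close>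
    have "r powr ?d \<le> ((m / A) powr (1 / DIM('a))) powr ?d"
      using False \<open>0 < r\<close> by (intro powr_mono2) auto
    then have "A * r powr ?d \<le> m"
      using \<open>0 < A\<close> \<open>0 < m\<close> by (simp add: powr_powr field_simps)
    then have "A * r powr (?d + \<gamma>) \<le> m * r powr \<gamma>"
      using \<open>0 < r\<close> by (simp add: powr_add mult_right_mono flip: mult.assoc)
    then have "A * ?c * r powr (?d + \<gamma>) + m * r powr \<gamma> \<le> (?c + 1) * m * r powr \<gamma>"
      using mult_left_mono[of _ _ ?c] c by (fastforce simp: algebra_simps)
    also have "\<dots> \<le> (?c + 1) * m * ((m / A) powr (\<gamma> / DIM('a)) + r powr \<gamma>)"
      using c \<open>0 < m\<close> by (intro mult_left_mono) auto
    moreover have "(\<integral>\<^sup>+w. ennreal (h w * norm (v - w) powr \<gamma>) \<partial>lborel)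
        \<le> ennreal (A * ?c * r powr (?d + \<gamma>) + m * r powr \<gamma>)"
      using assms by (intro nn_integral_riesz_le_near_far) auto
    ultimately show ?thesis
      by (auto intro: order_trans ennreal_leI)
  qed
qed

lemma nn_integral_inverse_one_plus_norm_power_le:
  "(\<integral>\<^sup>+w. ennreal (inverse ((1 + norm (w::'a::euclidean_space)) ^ (DIM('a) + 1))) \<partial>lborel)
     \<le> ennreal (2 ^ (DIM('a) + 1) * unit_ball_vol DIM('a))"
proof -
  let ?d = "DIM('a)"
  define F where "F w = (\<Sum>k. ennreal (inverse ((2 ^ k) ^ (?d + 1))) * indicator (cball 0 (2 ^ (k + 1))) w)"
    for w :: 'a
  have tail_le_F: "ennreal (inverse ((1 + norm w) ^ (?d + 1))) \<le> F w" for w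
  proof -
    obtain k :: nat where k: "2 ^ k \<le> 1 + norm w" "1 + norm w < 2 ^ (k + 1)"
      using ex_dyadic_interval[of "1 + norm w"] by auto
    then have "inverse ((1 + norm w) ^ (?d + 1)) \<le> inverse ((2 ^ k) ^ (?d + 1))"
      by (intro le_imp_inverse_le power_mono) auto
    then have "ennreal (inverse ((1 + norm w) ^ (?d + 1)))
        \<le> ennreal (inverse ((2 ^ k) ^ (?d + 1))) * indicator (cball 0 (2 ^ (k + 1))) w"
      using k by (simp add: ennreal_leI)
    also have "\<dots> \<le> F w"
      unfolding F_def by (rule sum_le_suminf[OF summableI, of "{k}", simplified])
    finally show ?thesis .
  qed
  have term_eq: "inverse (((2::real) ^ k) ^ (?d + 1)) * (unit_ball_vol ?d * (2 ^ (k + 1)) ^ ?d)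
      = 2 ^ ?d * unit_ball_vol ?d * (1 / 2) ^ k" for k
    by (simp add: power_mult_distrib power_one_over field_simps flip: power_mult)
  have "(\<integral>\<^sup>+w. ennreal (inverse ((1 + norm (w::'a)) ^ (?d + 1))) \<partial>lborel) \<le> integral\<^sup>N lborel F"
    by (intro nn_integral_mono tail_le_F)
  also have "\<dots> = (\<Sum>k. ennreal (2 ^ ?d * unit_ball_vol ?d * (1 / 2) ^ k))"
    unfolding F_def by (subst nn_integral_suminf_cball) (simp_all only: term_eq, auto)
  also have "\<dots> = ennreal (2 ^ (?d + 1) * unit_ball_vol ?d)"
    by (subst suminf_ennreal_geometric) auto
  finally show ?thesis .
qed

lemma neg_xlnx_le_two_sqrt:
  fixes x :: real
  assumes "0 < x"
  shows "- (x * ln x) \<le> 2 * sqrt x"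
proof -
  have "- (x * ln x) = 2 * sqrt x * (sqrt x * ln (1 / sqrt x))"
    using assms by (simp add: ln_div ln_sqrt)
  also have "\<dots> \<le> 2 * sqrt x * (sqrt x * (1 / sqrt x - 1))"
    using assms by (intro mult_left_mono ln_le_minus_one) auto
  also have "\<dots> \<le> 2 * sqrt x"
    using assms by (simp add: algebra_simps)
  finally show ?thesis .
qed

lemma neg_xlnx_le:
  fixes x y :: real
  assumes "0 \<le> x" "1 \<le> y"
  shows "- (x * ln x) \<le> 2 * x * ln y + 2 / y"
proof -
  have rhs_nonneg: "0 \<le> 2 * x * ln y" "0 \<le> 2 / y"
    using assms by simp_all
  consider "x = 0" | "0 < x" "inverse (y\<^sup>2) \<le> x" | "0 < x" "x < inverse (y\<^sup>2)"
    using assms by force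
  then show ?thesis
  proof cases
    case 1
    then show ?thesis
      using rhs_nonneg by simp
  next
    case 2
    then have "ln (inverse (y\<^sup>2)) \<le> ln x"
      using assms by (subst ln_le_cancel_iff) auto
    then have "- ln x \<le> 2 * ln y"
      using assms by (simp add: ln_inverse ln_realpow)
    then have "- (x * ln x) \<le> 2 * x * ln y"
      using mult_left_mono[OF _ assms(1)] by (fastforce simp: algebra_simps)
    then show ?thesis
      using rhs_nonneg by linarith
  next
    case 3
    then have "sqrt x \<le> 1 / y"
      using assms real_sqrt_less_mono[of x "inverse (y\<^sup>2)"] by (simp add: real_sqrt_inverse divide_inverse)
    then have "- (x * ln x) \<le> 2 / y"
      using neg_xlnx_le_two_sqrt[OF \<open>0 < x\<close>] by simp
    then show ?thesis
      using rhs_nonneg by linarith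
  qed
qed

lemma neg_part_xlnx_le:
  fixes x r :: real and d :: nat
  assumes "0 \<le> x" "0 \<le> r"
  shows "max (- (x * ln x)) 0 \<le> 2 * (real d + 1) * (x + x * r\<^sup>2) + 2 * inverse ((1 + r) ^ (d + 1))"
proof -
  have "r \<le> 1 + r\<^sup>2"
    using sum_squares_ge_zero[of "r - 1" 0] assms(2) by (simp add: power2_eq_square algebra_simps)
  then have "ln (1 + r) \<le> 1 + r\<^sup>2"
    using ln_add_one_self_le_self[OF assms(2)] by linarith
  then have "ln ((1 + r) ^ (d + 1)) \<le> (real d + 1) * (1 + r\<^sup>2)"
    using assms(2) by (subst ln_realpow) (auto intro!: mult_left_mono simp: add.commute)
  then have "2 * x * ln ((1 + r) ^ (d + 1)) \<le> 2 * (real d + 1) * (x + x * r\<^sup>2)"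
    using mult_left_mono[of _ _ "2 * x"] assms(1) by (fastforce simp: algebra_simps)
  moreover have "1 \<le> (1 + r) ^ (d + 1)"
    using assms(2) by (intro one_le_power) simp
  ultimately show ?thesis
    using neg_xlnx_le[OF assms(1), of "(1 + r) ^ (d + 1)"] assms by (simp add: divide_inverse)
qed

lemma hydro_bounds_nn_integral_le:
  assumes "hydro_bounds m0 M0 E0 H0 f"
  shows "(\<integral>\<^sup>+w. f w \<partial>lborel) \<le> ennreal M0"
proof -
  have "(\<integral>\<^sup>+w. f w \<partial>lborel) = ennreal (LINT w|lborel. f w)"
    using assms unfolding hydro_bounds_def by (intro nn_integral_eq_integral) auto
  then show ?thesis
    using assms unfolding hydro_bounds_def by (simp add: ennreal_leI)
qed

definition entropy_pos_part_bound :: "nat \<Rightarrow> real \<Rightarrow> real \<Rightarrow> real \<Rightarrow> real" where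
  "entropy_pos_part_bound d M0 E0 H0 = H0 + 2 * (real d + 1) * (M0 + E0) + 2 ^ (d + 2) * unit_ball_vol d"

lemma integral_pos_part_entropy_le:
  fixes f :: "real^'n \<Rightarrow> real"
  assumes hb: "hydro_bounds m0 M0 E0 H0 f"
  shows "integrable lborel (\<lambda>w. max (f w * ln (f w)) 0)"
    and "(LINT w|lborel. max (f w * ln (f w)) 0) \<le> entropy_pos_part_bound CARD('n) M0 E0 H0"
proof -
  let ?d = "CARD('n)"
  have f: "\<And>w. 0 \<le> f w" "integrable lborel f" "integrable lborel (\<lambda>w. f w * norm w ^ 2)"
    and L: "integrable lborel (\<lambda>w. f w * ln (f w))"
    and mass: "(LINT w|lborel. f w) \<le> M0" and energy: "(LINT w|lborel. f w * norm w ^ 2) \<le> E0"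
    and entropy: "(LINT w|lborel. f w * ln (f w)) \<le> H0"
    using hb unfolding hydro_bounds_def by auto
  define tail where "tail w = inverse ((1 + norm w) ^ (?d + 1))" for w :: "real^'n"
  have tail_meas: "tail \<in> borel_measurable lborel"
    unfolding tail_def by measurable
  have tail_nn: "(\<integral>\<^sup>+w. tail w \<partial>lborel) \<le> ennreal (2 ^ (?d + 1) * unit_ball_vol ?d)"
    using nn_integral_inverse_one_plus_norm_power_le[where 'a = "real^'n"] by (simp add: tail_def)
  have tail_int: "integrable lborel tail"
    using tail_meas tail_nn by (intro integrableI_bounded) (auto simp: tail_def top.not_eq_extremum
      intro: le_less_trans)
  define T where "T w = 2 * (real ?d + 1) * (f w + f w * norm w ^ 2) + 2 * tail w" for w
  have T_int: "integrable lborel T"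
    unfolding T_def using f tail_int by auto
  have neg_part: "integrable lborel (\<lambda>w. max (- (f w * ln (f w))) 0)"
    using L by (intro integrable_max integrable_minus) auto
  have "(LINT w|lborel. max (- (f w * ln (f w))) 0) \<le> integral\<^sup>L lborel T"
    using neg_part T_int neg_part_xlnx_le[OF f(1) norm_ge_zero]
    by (intro integral_mono) (simp_all only: T_def tail_def)
  also have "\<dots> = 2 * (real ?d + 1) * ((LINT w|lborel. f w) + (LINT w|lborel. f w * norm w ^ 2))
      + 2 * integral\<^sup>L lborel tail"
    unfolding T_def using f tail_int by simp
  also have "\<dots> \<le> 2 * (real ?d + 1) * (M0 + E0) + 2 * (2 ^ (?d + 1) * unit_ball_vol ?d)"
    using mass energy integral_real_bounded[OF _ tail_nn]
    by (intro add_mono mult_left_mono) auto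
  finally have neg_bound: "(LINT w|lborel. max (- (f w * ln (f w))) 0)
      \<le> 2 * (real ?d + 1) * (M0 + E0) + 2 * (2 ^ (?d + 1) * unit_ball_vol ?d)" .
  have pos_eq: "(\<lambda>w. max (f w * ln (f w)) 0) = (\<lambda>w. f w * ln (f w) + max (- (f w * ln (f w))) 0)"
    by auto
  show "integrable lborel (\<lambda>w. max (f w * ln (f w)) 0)"
    unfolding pos_eq using L neg_part by simp
  show "(LINT w|lborel. max (f w * ln (f w)) 0) \<le> entropy_pos_part_bound ?d M0 E0 H0"
    unfolding pos_eq entropy_pos_part_bound_def using L neg_part entropy neg_bound by simp
qed

text \<open>Chebyshev's inequality for the entropy: where \<open>f > K\<close>, \<open>f \<le> f ln f / ln K\<close>.\<close>
lemma nn_integral_superlevel_le_entropy: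
  fixes f :: "real^'n \<Rightarrow> real"
  assumes hb: "hydro_bounds m0 M0 E0 H0 f" and "1 < K"
  shows "(\<integral>\<^sup>+w. (if K < f w then f w else 0) \<partial>lborel)
     \<le> ennreal (entropy_pos_part_bound CARD('n) M0 E0 H0 / ln K)"
proof -
  let ?P = "\<lambda>w. max (f w * ln (f w)) 0"
  have lnK: "0 < ln K"
    using \<open>1 < K\<close> by simp
  have pointwise: "ennreal (if K < f w then f w else 0) \<le> ennreal (?P w / ln K)" for w
  proof (cases "K < f w")
    case True
    then have "f w * ln K \<le> f w * ln (f w)"
      using \<open>1 < K\<close> by (intro mult_left_mono) auto
    then show ?thesis
      using True lnK by (auto intro!: ennreal_leI simp: pos_le_divide_eq)
  qed simp
  have "(\<integral>\<^sup>+w. (if K < f w then f w else 0) \<partial>lborel) \<le> (\<integral>\<^sup>+w. ?P w / ln K \<partial>lborel)"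
    by (intro nn_integral_mono pointwise)
  also have "\<dots> = ennreal (LINT w|lborel. ?P w / ln K)"
    using integral_pos_part_entropy_le(1)[OF hb] lnK by (intro nn_integral_eq_integral) auto
  also have "\<dots> \<le> ennreal (entropy_pos_part_bound CARD('n) M0 E0 H0 / ln K)"
    using integral_pos_part_entropy_le(2)[OF hb] lnK by (auto intro!: ennreal_leI divide_right_mono)
  finally show ?thesis .
qed

lemma abs_set_integral_mult_le:
  fixes H u :: "real \<Rightarrow> real"
  assumes S: "S \<in> sets lborel" and H: "\<And>x. x \<in> S \<Longrightarrow> 0 \<le> H x"
    and u: "\<And>x. x \<in> S \<Longrightarrow> a \<le> u x \<and> u x \<le> b" "0 < a" "a \<le> b"
    and u_meas: "u \<in> borel_measurable borel"
  shows "\<bar>set_lebesgue_integral lborel S (\<lambda>x. H x * u x)\<bar> \<le> b * \<bar>set_lebesgue_integral lborel S H\<bar>"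
proof (cases "set_integrable lborel S (\<lambda>x. H x * u x)")
  case False
  then show ?thesis
    using u by (simp add: set_lebesgue_integral_def set_integrable_def not_integrable_integral_eq)
next
  case True
  \<comment> \<open>\<open>u \<ge> a > 0\<close> transfers measurability and integrability from \<open>H u\<close> to \<open>H\<close>\<close>
  have "(\<lambda>x. indicator S x * (H x * u x)) \<in> borel_measurable lborel"
    using True by (simp add: set_integrable_def borel_measurable_integrable)
  moreover have "(\<lambda>x. indicator S x * H x) = (\<lambda>x. indicator S x * (H x * u x) * inverse (u x))"
    using u by (force simp: indicator_def fun_eq_iff)
  ultimately have H_meas: "set_borel_measurable lborel S H"
    using u_meas by (simp add: set_borel_measurable_def)
  have H_le: "norm (H x) \<le> norm (inverse a * (H x * u x))" if "x \<in> S" for x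
  proof -
    have "H x * a \<le> H x * u x"
      using H[OF that] u(1)[OF that] by (intro mult_left_mono) auto
    then show ?thesis
      using H[OF that] u(1)[OF that] \<open>0 < a\<close> by (simp add: abs_mult field_simps)
  qed
  have H_int: "set_integrable lborel S H"
    using set_integrable_mult_right[OF True, of "inverse a"] H_meas
    by (rule set_integrable_bound) (use H_le in \<open>auto intro: AE_I2\<close>)
  have "set_lebesgue_integral lborel S (\<lambda>x. H x * u x) \<le> set_lebesgue_integral lborel S (\<lambda>x. b * H x)"
    using True H_int H u by (intro set_integral_mono) (auto simp: mult.commute[of b] intro!: mult_left_mono)
  moreover have "0 \<le> set_lebesgue_integral lborel S (\<lambda>x. H x * u x)" "0 \<le> set_lebesgue_integral lborel S H"
    unfolding set_lebesgue_integral_def using H u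
    by (auto intro!: integral_nonneg_AE AE_I2 simp: indicator_def) (meson order.trans less_imp_le mult_nonneg_nonneg)
  ultimately show ?thesis
    by (simp add: set_integral_mult_right)
qed

definition angular_weight :: "nat \<Rightarrow> real \<Rightarrow> real \<Rightarrow> real \<Rightarrow> real" where
  "angular_weight d \<gamma> s \<theta> = sin \<theta> ^ (d - 2) * (cos (\<theta>/2) powr (- real d - \<gamma>) - 1) *
     (sin (\<theta>/2) powr (\<gamma> - (real d - 2)) * tan (\<theta>/2) powr (- (\<gamma> + 2 * s + 1)))"

definition C_S_bound :: "nat \<Rightarrow> real \<Rightarrow> real \<Rightarrow> real \<Rightarrow> real" where
  "C_S_bound d \<gamma> s bt1 =
     \<bar>sphere_area (d - 1)\<bar> * (bt1 * \<bar>set_lebesgue_integral lborel {0<..<pi/2} (angular_weight d \<gamma> s)\<bar>)"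

lemma abs_C_S_le:
  assumes "- real d \<le> \<gamma>" and bt: "continuous_on {-1..1} bt" "\<forall>x\<in>{-1..1}. bt0 \<le> bt x \<and> bt x \<le> bt1"
    and "0 < bt0"
  shows "\<bar>C_S d \<gamma> s bt\<bar> \<le> C_S_bound d \<gamma> s bt1"
proof -
  let ?S = "{0<..<pi/2::real}"
  have "einterval 0 (ereal (pi/2)) = ?S"
    by (metis einterval_eq zero_ereal_def)
  then have C_S_eq: "C_S d \<gamma> s bt
      = sphere_area (d - 1) * set_lebesgue_integral lborel ?S (\<lambda>\<theta>. angular_weight d \<gamma> s \<theta> * bt (cos \<theta>))"
    unfolding C_S_def b_ang_def angular_weight_def
    by (subst interval_lebesgue_integral_le_eq) (auto simp: mult_ac)
  have "continuous_on UNIV (\<lambda>\<theta>. bt (cos \<theta>))"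
    by (rule continuous_on_compose2[OF bt(1)]) (auto intro!: continuous_intros)
  then have "(\<lambda>\<theta>. bt (cos \<theta>)) \<in> borel_measurable borel"
    by (rule borel_measurable_continuous_onI)
  moreover have "0 \<le> angular_weight d \<gamma> s \<theta>" if "\<theta> \<in> ?S" for \<theta>
  proof -
    have "0 < cos (\<theta>/2)" "cos (\<theta>/2) \<le> 1" "0 \<le> sin \<theta>"
      using that by (auto intro!: cos_gt_zero sin_ge_zero)
    then have "1 \<le> cos (\<theta>/2) powr (- real d - \<gamma>)"
      using \<open>- real d \<le> \<gamma>\<close> powr_mono2'[of "- real d - \<gamma>" "cos (\<theta>/2)" 1] by simp
    with \<open>0 \<le> sin \<theta>\<close> show ?thesis
      unfolding angular_weight_def by simp
  qed
  ultimately have "\<bar>set_lebesgue_integral lborel ?S (\<lambda>\<theta>. angular_weight d \<gamma> s \<theta> * bt (cos \<theta>))\<bar>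
      \<le> bt1 * \<bar>set_lebesgue_integral lborel ?S (angular_weight d \<gamma> s)\<bar>"
    using bt(2) \<open>0 < bt0\<close> by (intro abs_set_integral_mult_le[where a = bt0]) (auto dest!: bspec[of _ _ 0])
  then show ?thesis
    unfolding C_S_eq abs_mult C_S_bound_def by (intro mult_left_mono) auto
qed

lemma smooth_near_interval_imp_continuous_on:
  "smooth_near_interval bt \<Longrightarrow> continuous_on {-1..1} bt"
  unfolding smooth_near_interval_def
  by (metis funpow_0 differentiable_imp_continuous_on continuous_on_subset)

lemma gfun_pos: "0 < N \<Longrightarrow> 0 < gfun N q w"
  unfolding gfun_def by (auto simp: min_def)

lemma gfun_le: "0 < N \<Longrightarrow> gfun N q w \<le> N"
  unfolding gfun_def by (auto simp: min_def)

lemma gfun_zero_exponent: "gfun N 0 w = N"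
  unfolding gfun_def by simp

lemma gfun_le_on_cball:
  assumes "0 \<le> q" "0 < N" and w: "w \<in> cball v (max 1 (norm v) / 2)"
  shows "gfun N q w \<le> 2 powr q * gfun N q v"
proof (cases "norm v \<le> 1")
  case True
  have "1 \<le> norm v powr (-q)" if "v \<noteq> 0"
    using powr_mono2'[of "-q" "norm v" 1] True that \<open>0 \<le> q\<close> by simp
  then have "gfun N q v = N"
    unfolding gfun_def by (auto simp: min_def)
  moreover have "1 \<le> 2 powr q"
    using \<open>0 \<le> q\<close> by (intro ge_one_powr_ge_zero) auto
  ultimately show ?thesis
    using gfun_le[OF \<open>0 < N\<close>, of q w] \<open>0 < N\<close> by (simp add: order_trans[OF _ mult_right_mono[of 1]])
next
  case False
  have "norm v - norm w \<le> norm v / 2"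
    using w False norm_triangle_ineq2[of v w] by (auto simp: dist_norm)
  then have w_large: "norm v / 2 \<le> norm w"
    by simp
  with False have "w \<noteq> 0"
    by auto
  then have "gfun N q w \<le> N * norm w powr (-q)"
    unfolding gfun_def using \<open>0 < N\<close> by simp
  also have "\<dots> \<le> N * (norm v / 2) powr (-q)"
    using w_large False \<open>0 \<le> q\<close> \<open>0 < N\<close> by (intro mult_left_mono powr_mono2') auto
  also have "\<dots> = 2 powr q * (N * norm v powr (-q))"
    by (simp add: powr_divide powr_minus_divide)
  also have "N * norm v powr (-q) = gfun N q v"
    using False \<open>0 \<le> q\<close> powr_mono2'[of "-q" 1 "norm v"] unfolding gfun_def by (auto simp: min_def)
  finally show ?thesis .
qed

lemma norm_diff_powr_le:
  fixes v w :: "'a::real_normed_vector"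
  assumes "0 \<le> \<gamma>" "\<gamma> \<le> 2"
  shows "norm (v - w) powr \<gamma> \<le> (1 + norm v) powr \<gamma> * (2 * (1 + (norm w)\<^sup>2))"
proof -
  have "norm (v - w) \<le> norm v + norm w"
    by (rule norm_triangle_ineq4)
  also have "\<dots> \<le> (1 + norm v) * (1 + norm w)"
    by (simp add: algebra_simps)
  finally have "norm (v - w) powr \<gamma> \<le> (1 + norm v) powr \<gamma> * (1 + norm w) powr \<gamma>"
    using assms by (simp add: powr_mono2 flip: powr_mult)
  also have "(1 + norm w) powr \<gamma> \<le> (1 + norm w)\<^sup>2"
    using powr_mono[of \<gamma> 2 "1 + norm w"] assms by (simp add: powr_realpow)
  also have "\<dots> \<le> 2 * (1 + (norm w)\<^sup>2)"
    using sum_squares_ge_zero[of "norm w - 1" 0] by (simp add: power2_eq_square algebra_simps)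
  finally show ?thesis
    by (simp add: mult_left_mono)
qed

lemma riesz_potential_le_moments:
  fixes f :: "real^'n \<Rightarrow> real"
  assumes "0 \<le> \<gamma>" "\<gamma> \<le> 2" and hb: "hydro_bounds m0 M0 E0 H0 f"
  shows "(LINT w|lborel. f w * norm (v - w) powr \<gamma>) \<le> 2 * (M0 + E0) * (1 + norm v) powr \<gamma>"
proof -
  have f: "\<And>w. 0 \<le> f w" "f \<in> borel_measurable lborel" "integrable lborel f"
    "integrable lborel (\<lambda>w. f w * norm w ^ 2)"
    and moments: "(LINT w|lborel. f w) \<le> M0" "(LINT w|lborel. f w * norm w ^ 2) \<le> E0"
    using hb unfolding hydro_bounds_def by auto
  define B where "B w = 2 * (1 + norm v) powr \<gamma> * (f w + f w * norm w ^ 2)" for w :: "real^'n"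
  have B_int: "integrable lborel B"
    unfolding B_def using f by auto
  have kernel_le: "f w * norm (v - w) powr \<gamma> \<le> B w" for w
    using mult_left_mono[OF norm_diff_powr_le[OF assms(1,2), of v w] f(1)[of w]]
    by (simp add: B_def algebra_simps)
  have "norm (f w * norm (v - w) powr \<gamma>) \<le> norm (B w)" for w
    using kernel_le[of w] f(1)[of w] by simp
  then have "integrable lborel (\<lambda>w. f w * norm (v - w) powr \<gamma>)"
    using f(2) by (intro Bochner_Integration.integrable_bound[OF B_int _ AE_I2]) auto
  then have "(LINT w|lborel. f w * norm (v - w) powr \<gamma>) \<le> integral\<^sup>L lborel B"
    by (intro integral_mono B_int kernel_le)
  also have "\<dots> = 2 * (1 + norm v) powr \<gamma> * ((LINT w|lborel. f w) + (LINT w|lborel. f w * norm w ^ 2))"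
    unfolding B_def using f by simp
  also have "\<dots> \<le> 2 * (1 + norm v) powr \<gamma> * (M0 + E0)"
    using moments by (intro mult_left_mono) auto
  also have "\<dots> = 2 * (M0 + E0) * (1 + norm v) powr \<gamma>"
    by simp
  finally show ?thesis .
qed

lemma max_one_half_powr_le:
  fixes t \<gamma> :: real
  assumes "0 \<le> t" "\<gamma> \<le> 0"
  shows "(max 1 t / 2) powr \<gamma> \<le> 4 powr (-\<gamma>) * (1 + t) powr \<gamma>"
proof -
  have "0 < (1 + t) / 4" "(1 + t) / 4 \<le> max 1 t / 2"
    using assms by (auto simp: max_def)
  then have "(max 1 t / 2) powr \<gamma> \<le> ((1 + t) / 4) powr \<gamma>"
    using assms by (intro powr_mono2')
  then show ?thesis
    using \<open>0 < (1 + t) / 4\<close> by (simp add: powr_divide powr_minus_divide)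
qed

definition riesz_gfun_const :: "nat \<Rightarrow> real \<Rightarrow> real \<Rightarrow> real" where
  "riesz_gfun_const d \<gamma> M0 = (riesz_ball_const d \<gamma> + 1) * M0 * (M0 powr (\<gamma> / d) + 4 powr (-\<gamma>))"

lemma riesz_potential_le_gfun:
  fixes f :: "real^'n \<Rightarrow> real"
  defines "d \<equiv> real CARD('n)"
  assumes \<gamma>: "\<gamma> \<le> 0" "0 < d + \<gamma>" and hb: "hydro_bounds m0 M0 E0 H0 f" and "0 < M0"
    and "0 \<le> q" "0 < N" and f_le: "\<And>w. f w \<le> gfun N q w"
  shows "(LINT w|lborel. f w * norm (v - w) powr \<gamma>)
     \<le> riesz_gfun_const CARD('n) \<gamma> M0
       * (2 powr (- q * \<gamma> / d) * gfun N q v powr (- \<gamma> / d) + (1 + norm v) powr \<gamma>)"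
proof -
  let ?c = "riesz_ball_const CARD('n) \<gamma> + 1" and ?g = "gfun N q v"
  let ?A = "2 powr q * ?g" and ?r = "max 1 (norm v) / 2"
  have c: "0 < ?c"
    using riesz_ball_const_pos[of "CARD('n)" \<gamma>] \<gamma> unfolding d_def by simp
  have g: "0 < ?g"
    using gfun_pos[OF \<open>0 < N\<close>] .
  have f: "f \<in> borel_measurable lborel" "\<And>w. 0 \<le> f w"
    using hb unfolding hydro_bounds_def by auto
  have A_term: "(M0 / ?A) powr (\<gamma> / d) = M0 powr (\<gamma> / d) * (2 powr (- q * \<gamma> / d) * ?g powr (- \<gamma> / d))"
  proof -
    have "?A powr (- \<gamma> / d) = 2 powr (- q * \<gamma> / d) * ?g powr (- \<gamma> / d)"
      by (simp add: powr_mult powr_powr)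
    then show ?thesis
      using g \<open>0 < M0\<close> by (simp add: powr_divide powr_minus_divide)
  qed
  have "(\<integral>\<^sup>+w. ennreal (f w * norm (v - w) powr \<gamma>) \<partial>lborel)
      \<le> ennreal ((riesz_ball_const DIM(real^'n) \<gamma> + 1) * M0
        * ((M0 / ?A) powr (\<gamma> / DIM(real^'n)) + ?r powr \<gamma>))"
  proof (rule nn_integral_riesz_le_local)
    show "f w \<le> ?A" if "w \<in> cball v ?r" for w
      using f_le[of w] gfun_le_on_cball[OF \<open>0 \<le> q\<close> \<open>0 < N\<close> that] by simp
  qed (use \<gamma> \<open>0 < M0\<close> g f hydro_bounds_nn_integral_le[OF hb] in \<open>auto simp: d_def\<close>)
  then have nn_bound: "(\<integral>\<^sup>+w. ennreal (f w * norm (v - w) powr \<gamma>) \<partial>lborel)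
      \<le> ennreal (?c * M0 * ((M0 / ?A) powr (\<gamma> / d) + ?r powr \<gamma>))"
    by (simp add: d_def)
  have "?c * M0 * ((M0 / ?A) powr (\<gamma> / d) + ?r powr \<gamma>)
      \<le> ?c * M0 * (M0 powr (\<gamma> / d) * (2 powr (- q * \<gamma> / d) * ?g powr (- \<gamma> / d))
        + 4 powr (-\<gamma>) * (1 + norm v) powr \<gamma>)"
    unfolding A_term using max_one_half_powr_le[OF norm_ge_zero \<gamma>(1), of v] c \<open>0 < M0\<close>
    by (intro mult_left_mono add_left_mono) auto
  also have "\<dots> \<le> ?c * M0 * ((M0 powr (\<gamma> / d) + 4 powr (-\<gamma>))
      * (2 powr (- q * \<gamma> / d) * ?g powr (- \<gamma> / d) + (1 + norm v) powr \<gamma>))"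
    using c \<open>0 < M0\<close> by (intro mult_left_mono mult_add_le_add_mult_add) auto
  finally show ?thesis
    using nn_bound c \<open>0 < M0\<close> unfolding riesz_gfun_const_def d_def
    by (intro integral_real_bounded) (auto simp: mult.assoc intro: order_trans)
qed

definition psi :: "real \<Rightarrow> real \<Rightarrow> real \<Rightarrow> real" where
  "psi \<gamma> d r = (if r \<le> exp 2 then 1 else r powr (\<gamma> / (2 * d)) + (ln r / 2) powr (- (1 + \<gamma> / d)))"

lemma psi_pos: "0 < r \<Longrightarrow> 0 < psi \<gamma> d r"
  unfolding psi_def by (auto intro!: add_pos_nonneg)

lemma psi_tendsto_0:
  assumes "\<gamma> < 0" "0 < d + \<gamma>"
  shows "(psi \<gamma> d \<longlongrightarrow> 0) at_top"
proof -
  have "\<gamma> / (2 * d) < 0" "- (1 + \<gamma> / d) < 0"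
    using assms by (auto simp: divide_neg_pos field_simps)
  moreover have "filterlim (\<lambda>r::real. ln r / 2) at_top at_top"
    using filterlim_tendsto_pos_mult_at_top[OF tendsto_const _ ln_at_top, of "1 / 2"]
    by (simp add: mult.commute)
  ultimately have "((\<lambda>r. r powr (\<gamma> / (2 * d)) + (ln r / 2) powr (- (1 + \<gamma> / d))) \<longlongrightarrow> 0 + 0) at_top"
    by (intro tendsto_add tendsto_neg_powr filterlim_ident)
  moreover have "\<forall>\<^sub>F r in at_top. r powr (\<gamma> / (2 * d)) + (ln r / 2) powr (- (1 + \<gamma> / d)) = psi \<gamma> d r"
    using eventually_gt_at_top[of "exp 2"] by eventually_elim (auto simp: psi_def)
  ultimately show ?thesis
    using tendsto_cong by force
qed

lemma one_less_ln_sqrt: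
  assumes "exp 2 < N"
  shows "1 < ln (sqrt N)"
proof -
  have "0 < N"
    using assms by (rule less_trans[OF exp_gt_zero])
  then have "2 < ln N"
    using assms ln_less_cancel_iff[of "exp 2" N] by simp
  with \<open>0 < N\<close> show ?thesis
    by (simp add: ln_sqrt)
qed

lemma nn_integral_riesz_le_sup_mass:
  fixes v :: "'a::euclidean_space" and h :: "'a \<Rightarrow> real"
  assumes "\<gamma> \<le> 0" "0 < real DIM('a) + \<gamma>" "0 < A" "0 < m"
    and "h \<in> borel_measurable lborel" "\<And>w. 0 \<le> h w" "(\<integral>\<^sup>+w. h w \<partial>lborel) \<le> ennreal m"
    and "\<And>w. h w \<le> A"
  shows "(\<integral>\<^sup>+w. ennreal (h w * norm (v - w) powr \<gamma>) \<partial>lborel)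
     \<le> ennreal ((riesz_ball_const DIM('a) \<gamma> + 1) * m powr (1 + \<gamma> / DIM('a)) * A powr (- \<gamma> / DIM('a)))"
  using nn_integral_riesz_le_optimal[OF assms(1-7)] assms(8) mult_divide_powr_eq[OF assms(4,3), of "\<gamma> / DIM('a)"]
  by (simp add: mult.assoc)

text \<open>Split \<open>f\<close> at the level \<open>K = sqrt N\<close>: the part below \<open>K\<close> has mass at most \<open>M0\<close>, the
  part above has mass at most \<open>B / ln K\<close> by the entropy bound.\<close>
lemma nn_integral_riesz_le_entropy_split:
  fixes f :: "real^'n \<Rightarrow> real" and \<gamma> M0 E0 H0 N :: real
  defines "d \<equiv> real CARD('n)"
  defines "e \<equiv> 1 + \<gamma> / d" and "B \<equiv> \<bar>entropy_pos_part_bound CARD('n) M0 E0 H0\<bar> + 1"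
  assumes \<gamma>: "\<gamma> \<le> 0" "0 < d + \<gamma>" and hb: "hydro_bounds m0 M0 E0 H0 f" and "0 < M0"
    and "exp 2 < N" and f_le: "\<And>w. f w \<le> N"
  shows "(\<integral>\<^sup>+w. ennreal (f w * norm (v - w) powr \<gamma>) \<partial>lborel)
     \<le> ennreal ((riesz_ball_const CARD('n) \<gamma> + 1)
       * (M0 powr e * N powr (- \<gamma> / (2 * d)) + B powr e * (ln N / 2) powr (- e) * N powr (- \<gamma> / d)))"
proof -
  let ?c = "riesz_ball_const CARD('n) \<gamma> + 1"
  let ?P = "\<lambda>h. \<integral>\<^sup>+w. ennreal (h w * norm (v - w) powr \<gamma>) \<partial>lborel"
  have c: "0 < ?c"
    using riesz_ball_const_pos[of "CARD('n)" \<gamma>] \<gamma> unfolding d_def by simp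
  have f: "f \<in> borel_measurable lborel" "\<And>w. 0 \<le> f w"
    using hb unfolding hydro_bounds_def by auto
  have "0 < N" "0 < B"
    using \<open>exp 2 < N\<close> unfolding B_def by (auto intro: less_trans[OF exp_gt_zero] add_pos_nonneg)
  define K where "K = sqrt N"
  have "1 < ln K" "0 < K" "ln K = ln N / 2"
    using one_less_ln_sqrt[OF \<open>exp 2 < N\<close>] \<open>0 < N\<close> unfolding K_def by (auto simp: ln_sqrt)
  moreover have "1 < K"
    using \<open>1 < ln K\<close> ln_le_minus_one[OF \<open>0 < K\<close>] by linarith
  ultimately have K: "1 < K" "0 < K" "0 < ln K" "ln K = ln N / 2"
    by auto
  define low where "low w = (if K < f w then 0 else f w)" for w
  define high where "high w = (if K < f w then f w else 0)" for w
  have low: "low \<in> borel_measurable lborel" "\<And>w. 0 \<le> low w" "\<And>w. low w \<le> K"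
    and high: "high \<in> borel_measurable lborel" "\<And>w. 0 \<le> high w" "\<And>w. high w \<le> N"
    unfolding low_def high_def using f f_le K \<open>0 < N\<close> by auto
  have "(\<integral>\<^sup>+w. low w \<partial>lborel) \<le> ennreal M0"
    using hydro_bounds_nn_integral_le[OF hb]
    by (rule order_trans[rotated]) (auto intro!: nn_integral_mono simp: low_def f(2))
  then have P_low: "?P low \<le> ennreal (?c * M0 powr e * N powr (- \<gamma> / (2 * d)))"
    using nn_integral_riesz_le_sup_mass[OF _ _ K(2) \<open>0 < M0\<close> low(1,2) _ low(3), of \<gamma> v] \<gamma> \<open>0 < N\<close>
    by (simp add: d_def e_def K_def powr_half_sqrt[symmetric] powr_powr)
  have "(\<integral>\<^sup>+w. high w \<partial>lborel) \<le> ennreal (entropy_pos_part_bound CARD('n) M0 E0 H0 / ln K)"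
    using nn_integral_superlevel_le_entropy[OF hb K(1)] unfolding high_def .
  also have "\<dots> \<le> ennreal (B / ln K)"
    using K(3) unfolding B_def by (intro ennreal_leI divide_right_mono) auto
  finally have "?P high \<le> ennreal (?c * (B / ln K) powr e * N powr (- \<gamma> / d))"
    using nn_integral_riesz_le_sup_mass[OF _ _ \<open>0 < N\<close> _ high(1,2) _ high(3), of \<gamma> "B / ln K" v] \<gamma>
      \<open>0 < B\<close> K(3) by (simp add: d_def e_def)
  also have "(B / ln K) powr e = B powr e * (ln N / 2) powr (- e)"
    using K(3) \<open>0 < B\<close> unfolding K(4) by (subst powr_divide) (simp_all add: powr_minus_divide)
  finally have P_high: "?P high \<le> ennreal (?c * (B powr e * (ln N / 2) powr (- e)) * N powr (- \<gamma> / d))" .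
  have "?P f = ?P low + ?P high"
    using f low high
    by (subst nn_integral_add[symmetric]) (auto simp: low_def high_def intro!: nn_integral_cong)
  also have "\<dots> \<le> ennreal (?c * M0 powr e * N powr (- \<gamma> / (2 * d)))
      + ennreal (?c * (B powr e * (ln N / 2) powr (- e)) * N powr (- \<gamma> / d))"
    by (rule add_mono[OF P_low P_high])
  also have "\<dots> = ennreal (?c * M0 powr e * N powr (- \<gamma> / (2 * d))
      + ?c * (B powr e * (ln N / 2) powr (- e)) * N powr (- \<gamma> / d))"
    using c by (intro ennreal_plus[symmetric] mult_nonneg_nonneg) auto
  also have "?c * M0 powr e * N powr (- \<gamma> / (2 * d)) + ?c * (B powr e * (ln N / 2) powr (- e)) * N powr (- \<gamma> / d)
      = ?c * (M0 powr e * N powr (- \<gamma> / (2 * d)) + B powr e * (ln N / 2) powr (- e) * N powr (- \<gamma> / d))"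
    by (simp add: algebra_simps)
  finally show ?thesis .
qed

definition riesz_psi_const :: "nat \<Rightarrow> real \<Rightarrow> real \<Rightarrow> real \<Rightarrow> real \<Rightarrow> real" where
  "riesz_psi_const d \<gamma> M0 E0 H0 = (riesz_ball_const d \<gamma> + 1)
     * (M0 powr (1 + \<gamma> / d) + (\<bar>entropy_pos_part_bound d M0 E0 H0\<bar> + 1) powr (1 + \<gamma> / d))"

lemma riesz_potential_le_psi:
  fixes f :: "real^'n \<Rightarrow> real" and \<gamma> M0 E0 H0 N :: real
  defines "d \<equiv> real CARD('n)"
  defines "e \<equiv> 1 + \<gamma> / d" and "B \<equiv> \<bar>entropy_pos_part_bound CARD('n) M0 E0 H0\<bar> + 1"
  assumes \<gamma>: "\<gamma> \<le> 0" "0 < d + \<gamma>" and hb: "hydro_bounds m0 M0 E0 H0 f" and "0 < M0"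
    and "0 < N" and f_le: "\<And>w. f w \<le> N"
  shows "(LINT w|lborel. f w * norm (v - w) powr \<gamma>)
     \<le> riesz_psi_const CARD('n) \<gamma> M0 E0 H0 * (N powr (- \<gamma> / d) * psi \<gamma> d N)"
proof -
  let ?c = "riesz_ball_const CARD('n) \<gamma> + 1"
  let ?P = "\<integral>\<^sup>+w. ennreal (f w * norm (v - w) powr \<gamma>) \<partial>lborel"
  have c: "0 < ?c"
    using riesz_ball_const_pos[of "CARD('n)" \<gamma>] \<gamma> unfolding d_def by simp
  have f: "f \<in> borel_measurable lborel" "\<And>w. 0 \<le> f w"
    using hb unfolding hydro_bounds_def by auto
  have "?P \<le> ennreal (?c * (M0 powr e + B powr e) * (N powr (- \<gamma> / d) * psi \<gamma> d N))"
  proof (cases "N \<le> exp 2")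
    case True
    have "?P \<le> ennreal (?c * M0 powr e * N powr (- \<gamma> / d))"
      using nn_integral_riesz_le_sup_mass[OF _ _ \<open>0 < N\<close> \<open>0 < M0\<close> f hydro_bounds_nn_integral_le[OF hb] f_le]
        \<gamma> by (simp add: d_def e_def)
    also have "\<dots> \<le> ennreal (?c * (M0 powr e + B powr e) * (N powr (- \<gamma> / d) * psi \<gamma> d N))"
      using c True by (intro ennreal_leI) (simp add: psi_def mult_left_mono mult_right_mono)
    finally show ?thesis .
  next
    case False
    then have "?P \<le> ennreal (?c * (M0 powr e * N powr (- \<gamma> / (2 * d))
        + B powr e * (ln N / 2) powr (- e) * N powr (- \<gamma> / d)))"
      using \<gamma> hb \<open>0 < M0\<close> f_le unfolding d_def e_def B_def
      by (intro nn_integral_riesz_le_entropy_split) auto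
    also have "\<dots> = ennreal (?c * (M0 powr e * N powr (\<gamma> / (2 * d)) + B powr e * (ln N / 2) powr (- e))
        * N powr (- \<gamma> / d))"
      by (simp add: algebra_simps flip: powr_add)
    also have "\<dots> \<le> ennreal (?c * (M0 powr e + B powr e) * (N powr (- \<gamma> / d) * psi \<gamma> d N))"
    proof -
      have "psi \<gamma> d N = N powr (\<gamma> / (2 * d)) + (ln N / 2) powr (- e)"
        using False by (simp add: psi_def e_def)
      then have "M0 powr e * N powr (\<gamma> / (2 * d)) + B powr e * (ln N / 2) powr (- e)
          \<le> (M0 powr e + B powr e) * psi \<gamma> d N"
        by (simp only: mult_add_le_add_mult_add powr_ge_zero)
      then have "(?c * N powr (- \<gamma> / d)) * (M0 powr e * N powr (\<gamma> / (2 * d)) + B powr e * (ln N / 2) powr (- e))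
          \<le> (?c * N powr (- \<gamma> / d)) * ((M0 powr e + B powr e) * psi \<gamma> d N)"
        using c by (intro mult_left_mono) auto
      then show ?thesis
        by (intro ennreal_leI) (simp add: mult_ac)
    qed
    finally show ?thesis .
  qed
  then show ?thesis
    using c psi_pos[OF \<open>0 < N\<close>, of \<gamma> d] unfolding riesz_psi_const_def e_def B_def d_def
    by (intro integral_real_bounded) (auto intro!: mult_nonneg_nonneg)
qed

lemma Q_ns_le_of_potential_le:
  fixes f :: "real^'n \<Rightarrow> real"
  assumes "\<bar>C_S CARD('n) \<gamma> s bt\<bar> \<le> K" "\<And>w. 0 \<le> f w"
    and potential: "(LINT w|lborel. f w * norm (v - w) powr \<gamma>) \<le> B * X" and "0 \<le> X" "K * \<bar>B\<bar> \<le> C"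
  shows "Q_ns \<gamma> s bt f f v \<le> C * (f v * X)"
proof -
  let ?P = "LINT w|lborel. f w * norm (v - w) powr \<gamma>"
  have "0 \<le> ?P"
    using assms(2) by (intro integral_nonneg_AE) auto
  have "Q_ns \<gamma> s bt f f v \<le> \<bar>C_S CARD('n) \<gamma> s bt\<bar> * (f v * ?P)"
    unfolding Q_ns_def using \<open>0 \<le> ?P\<close> assms(2)[of v] by (simp add: mult.assoc mult_right_mono)
  also have "\<dots> \<le> K * (f v * (\<bar>B\<bar> * X))"
    using \<open>0 \<le> ?P\<close> assms(1,2,4) order_trans[OF potential mult_right_mono[OF abs_ge_self \<open>0 \<le> X\<close>]]
    by (intro mult_mono mult_left_mono) auto
  also have "\<dots> = (K * \<bar>B\<bar>) * (f v * X)"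
    by (simp add: mult_ac)
  also have "\<dots> \<le> C * (f v * X)"
    using assms(2)[of v] \<open>0 \<le> X\<close> \<open>K * \<bar>B\<bar> \<le> C\<close> by (intro mult_right_mono) auto
  finally show ?thesis .
qed

definition Q_ns_const :: "nat \<Rightarrow> real \<Rightarrow> real \<Rightarrow> real \<Rightarrow> real \<Rightarrow> real \<Rightarrow> real \<Rightarrow> real" where
  "Q_ns_const d \<gamma> s bt1 M0 E0 H0 = C_S_bound d \<gamma> s bt1
     * (\<bar>2 * (M0 + E0)\<bar> + \<bar>riesz_gfun_const d \<gamma> M0\<bar> + \<bar>riesz_psi_const d \<gamma> M0 E0 H0\<bar>) + 1"

lemma C_S_bound_mult_le_Q_ns_const:
  assumes "0 \<le> C_S_bound d \<gamma> s bt1"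
    and "\<bar>B\<bar> \<le> \<bar>2 * (M0 + E0)\<bar> + \<bar>riesz_gfun_const d \<gamma> M0\<bar> + \<bar>riesz_psi_const d \<gamma> M0 E0 H0\<bar>"
  shows "C_S_bound d \<gamma> s bt1 * \<bar>B\<bar> \<le> Q_ns_const d \<gamma> s bt1 M0 E0 H0"
  using mult_left_mono[OF assms(2,1)] unfolding Q_ns_const_def by linarith

lemma Q_ns_const_pos: "0 \<le> C_S_bound d \<gamma> s bt1 \<Longrightarrow> 0 < Q_ns_const d \<gamma> s bt1 M0 E0 H0"
  unfolding Q_ns_const_def by (intro add_nonneg_pos mult_nonneg_nonneg) auto

lemma hydro_bounds_mass_pos: "hydro_bounds m0 M0 E0 H0 f \<Longrightarrow> 0 < m0 \<Longrightarrow> 0 < M0"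
  unfolding hydro_bounds_def by linarith

lemma Q_ns_bounds_explicit:
  fixes f :: "real^'n \<Rightarrow> real" and v :: "real^'n" and \<gamma> s bt0 bt1 m0 M0 E0 H0 q N :: real
  defines "d \<equiv> real CARD('n)" and "C \<equiv> Q_ns_const CARD('n) \<gamma> s bt1 M0 E0 H0" and "g \<equiv> gfun N q v"
  assumes \<gamma>: "0 < d + \<gamma>" "\<gamma> \<le> 2"
    and bt: "continuous_on {-1..1} bt" "\<forall>x\<in>{-1..1}. bt0 \<le> bt x \<and> bt x \<le> bt1" "0 < bt0"
    and hb: "hydro_bounds m0 M0 E0 H0 f" and "0 < m0"
    and "0 \<le> q" "0 < N" and f_le: "\<And>w. f w \<le> gfun N q w" and f_v: "f v = g"
  shows "0 \<le> \<gamma> \<Longrightarrow> Q_ns \<gamma> s bt f f v \<le> C * ((1 + norm v) powr \<gamma> * g)"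
    and "\<gamma> < 0 \<Longrightarrow> Q_ns \<gamma> s bt f f v \<le> C * (2 powr (- q * \<gamma> / d) * g powr (1 - \<gamma> / d) + (1 + norm v) powr \<gamma> * g)"
    and "q = 0 \<Longrightarrow> \<gamma> < 0 \<Longrightarrow>
      Q_ns \<gamma> s bt f f v \<le> C * (g powr (1 - \<gamma> / d) * psi \<gamma> d g + (1 + norm v) powr \<gamma> * g)"
proof -
  let ?K = "C_S_bound CARD('n) \<gamma> s bt1"
  have C_S: "\<bar>C_S CARD('n) \<gamma> s bt\<bar> \<le> ?K"
    using \<gamma> unfolding d_def by (intro abs_C_S_le[OF _ bt]) auto
  then have "0 \<le> ?K"
    by (rule order_trans[OF abs_ge_zero])
  have f: "\<And>w. 0 \<le> f w"
    using hb unfolding hydro_bounds_def by auto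
  have "0 < M0"
    using hydro_bounds_mass_pos[OF hb \<open>0 < m0\<close>] .
  have g: "0 < g"
    unfolding g_def using gfun_pos[OF \<open>0 < N\<close>] .
  have g_powr: "g * g powr (- \<gamma> / d) = g powr (1 - \<gamma> / d)"
    using g by (simp add: powr_diff powr_minus_divide)
  have C_ge: "?K * \<bar>2 * (M0 + E0)\<bar> \<le> C" "?K * \<bar>riesz_gfun_const CARD('n) \<gamma> M0\<bar> \<le> C"
    "?K * \<bar>riesz_psi_const CARD('n) \<gamma> M0 E0 H0\<bar> \<le> C"
    unfolding C_def using \<open>0 \<le> ?K\<close> by (intro C_S_bound_mult_le_Q_ns_const; simp)+
  show "Q_ns \<gamma> s bt f f v \<le> C * ((1 + norm v) powr \<gamma> * g)" if "0 \<le> \<gamma>"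
  proof -
    have "Q_ns \<gamma> s bt f f v \<le> C * (f v * (1 + norm v) powr \<gamma>)"
      using riesz_potential_le_moments[OF that \<open>\<gamma> \<le> 2\<close> hb, of v]
      by (intro Q_ns_le_of_potential_le[OF C_S f _ _ C_ge(1)]) simp_all
    then show ?thesis
      by (simp add: f_v mult.commute)
  qed
  show "Q_ns \<gamma> s bt f f v \<le> C * (2 powr (- q * \<gamma> / d) * g powr (1 - \<gamma> / d) + (1 + norm v) powr \<gamma> * g)"
    if "\<gamma> < 0"
  proof -
    have "Q_ns \<gamma> s bt f f v
        \<le> C * (f v * (2 powr (- q * \<gamma> / d) * g powr (- \<gamma> / d) + (1 + norm v) powr \<gamma>))"
      using riesz_potential_le_gfun[OF _ _ hb \<open>0 < M0\<close> \<open>0 \<le> q\<close> \<open>0 < N\<close> f_le, of \<gamma> v] that \<gamma>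
      by (intro Q_ns_le_of_potential_le[OF C_S f _ _ C_ge(2)]) (simp_all add: d_def g_def)
    then show ?thesis
      unfolding g_powr[symmetric] by (simp add: f_v algebra_simps)
  qed
  show "Q_ns \<gamma> s bt f f v \<le> C * (g powr (1 - \<gamma> / d) * psi \<gamma> d g + (1 + norm v) powr \<gamma> * g)"
    if "q = 0" "\<gamma> < 0"
  proof -
    have "g = N" "\<And>w. f w \<le> N"
      using f_le that(1) unfolding g_def by (simp_all add: gfun_zero_exponent)
    then have "Q_ns \<gamma> s bt f f v \<le> C * (f v * (g powr (- \<gamma> / d) * psi \<gamma> d g))"
      using riesz_potential_le_psi[OF _ _ hb \<open>0 < M0\<close> \<open>0 < N\<close>, of \<gamma> v] that \<gamma>
        less_imp_le[OF psi_pos[OF \<open>0 < N\<close>, of \<gamma> d]]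
      by (intro Q_ns_le_of_potential_le[OF C_S f _ _ C_ge(3)]) (simp_all add: d_def)
    also have "\<dots> \<le> C * (g powr (1 - \<gamma> / d) * psi \<gamma> d g + (1 + norm v) powr \<gamma> * g)"
    proof -
      have eq: "f v * (g powr (- \<gamma> / d) * psi \<gamma> d g) = g powr (1 - \<gamma> / d) * psi \<gamma> d g"
        unfolding g_powr[symmetric] by (simp add: f_v mult_ac)
      have "0 \<le> C"
        unfolding C_def by (rule less_imp_le[OF Q_ns_const_pos[OF \<open>0 \<le> ?K\<close>]])
      then show ?thesis
        unfolding eq using g by (intro mult_left_mono) auto
    qed
    finally show ?thesis .
  qed
qed

theorem proposition3p11:
  fixes s \<gamma> bt0 bt1 m0 M0 E0 H0 :: real
  assumes "CARD('n) \<ge> 2"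
    and "0 < s" "s < 1" "0 \<le> \<gamma> + 2 * s" "\<gamma> + 2 * s \<le> 2"
    and "0 < bt0" "bt0 \<le> bt1" "0 < m0"
  shows "\<exists>C>0. \<exists>\<psi>::real \<Rightarrow> real. (\<forall>r>0. \<psi> r > 0) \<and> (\<psi> \<longlongrightarrow> 0) at_top \<and>
    (\<forall>(bt::real \<Rightarrow> real) (q::real) (N::real) (f::real^'n \<Rightarrow> real) (v::real^'n).
       smooth_near_interval bt \<and> (\<forall>x\<in>{-1..1}. bt0 \<le> bt x \<and> bt x \<le> bt1) \<and>
       0 \<le> q \<and> 0 < N \<and> hydro_bounds m0 M0 E0 H0 f \<and>
       (\<forall>w. f w \<le> gfun N q w) \<and> f v = gfun N q v \<longrightarrow>
       (0 \<le> \<gamma> \<longrightarrow>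
          Q_ns \<gamma> s bt f f v \<le> C * ((1 + norm v) powr \<gamma> * gfun N q v)) \<and>
       (\<gamma> < 0 \<longrightarrow>
          Q_ns \<gamma> s bt f f v \<le> C * (2 powr (- q * \<gamma> / real CARD('n)) *
               gfun N q v powr (1 - \<gamma> / real CARD('n)) + (1 + norm v) powr \<gamma> * gfun N q v)) \<and>
       (q = 0 \<and> - real CARD('n) < \<gamma> \<and> \<gamma> < 0 \<longrightarrow>
          Q_ns \<gamma> s bt f f v \<le> C * (gfun N q v powr (1 - \<gamma> / real CARD('n)) * \<psi> (gfun N q v)
               + (1 + norm v) powr \<gamma> * gfun N q v)))"
proof -
  let ?d = "real CARD('n)"
  define C where "C = Q_ns_const CARD('n) \<gamma> s bt1 M0 E0 H0"
  \<comment> \<open>for \<open>\<gamma> \<ge> 0\<close> the bound involving \<open>\<psi>\<close> is vacuous\<close>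
  define \<psi> where "\<psi> = (if \<gamma> < 0 then psi \<gamma> ?d else inverse)"
  have \<gamma>: "0 < ?d + \<gamma>" "\<gamma> \<le> 2"
    using assms(1-5) by linarith+
  have "0 < C"
    unfolding C_def using assms(6,7) by (intro Q_ns_const_pos) (simp add: C_S_bound_def)
  moreover have "\<forall>r>0. 0 < \<psi> r"
    unfolding \<psi>_def using psi_pos by simp
  moreover have "(\<psi> \<longlongrightarrow> 0) at_top"
    unfolding \<psi>_def using psi_tendsto_0[OF _ \<gamma>(1)] tendsto_inverse_0_at_top[OF filterlim_ident]
    by simp
  \<comment> \<open>\<open>auto\<close> rewrites \<open>- q * \<gamma> / d\<close> in the goal, so the second bound is also supplied simplified\<close>
  ultimately show ?thesis
    using assms(6,8)
    by (intro exI[of _ C] exI[of _ \<psi>] conjI allI impI; (elim conjE)?)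
       (auto simp: \<psi>_def C_def intro: Q_ns_bounds_explicit[OF \<gamma>] Q_ns_bounds_explicit(2)[OF \<gamma>, simplified]
         smooth_near_interval_imp_continuous_on)
qed

end
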